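(* Let $p,p'$ be processes (of possibly different LTSs) such that $p$ subsumes $p'$. If $\varphi\in\mathrm{sHML}$ is closed and $p\in[\![\varphi]\!]_B$, then $p'\in[\![\varphi]\!]_B$. Dually, if $\varphi\in\mathrm{cHML}$ is closed and $p\notin[\![\varphi]\!]_B$, then $p'\notin[\![\varphi]\!]_B$.
   Context: Fix a finite set $\mathrm{Act}$ of actions, $\tau\notin\mathrm{Act}$. $\mathrm{sHML}$: $\varphi::=\mathrm{tt}\mid\mathrm{ff}\mid[A]\varphi\mid\varphi\wedge\varphi\mid\max X.\varphi\mid X$; $\mathrm{cHML}$: $\varphi::=\mathrm{tt}\mid\mathrm{ff}\mid\langle A\rangle\varphi\mid\varphi\vee\varphi\mid\min X.\varphi\mid X$ ($A\subseteq\mathrm{Act}$, guarded). Branching-time semantics over an LTS $(\mathrm{Proc},\mathrm{Act}\cup\{\tau\},\to)$, with $p\overset{a}{\Longrightarrow}q$ iff $p(\xrightarrow{\tau})^*\xrightarrow{a}(\xrightarrow{\tau})^*q$ and $p\overset{a_1\cdots a_k}{\Longrightarrow}q$ the composition: $[\![\mathrm{tt}]\!]_B=\mathrm{Proc}$, $[\![\mathrm{ff}]\!]_B=\emptyset$, $\vee,\wedge$ union/intersection, $[\![\langle A\rangle\varphi,\rho]\!]_B=\{p\mid\exists a\in A,\exists q.\ p\overset{a}{\Longrightarrow}q\wedge q\in[\![\varphi,\rho]\!]_B\}$, $[\![[A]\varphi,\rho]\!]_B=\{p\mid\forall a\in A,\forall q.\ p\overset{a}{\Longrightarrow}q\Rightarrow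 q\in[\![\varphi,\rho]\!]_B\}$, $\min/\max$ as least/greatest fixpoints, $[\![X,\rho]\!]_B=\rho(X)$. A process $p$ produces a finite trace $s\in\mathrm{Act}^*$ if $p\overset{s}{\Longrightarrow}q$ for some $q$, and produces an infinite trace $a_1a_2\cdots$ if there are $p=p_0,p_1,p_2,\ldots$ with $p_{i-1}\overset{a_i}{\Longrightarrow}p_i$ for all $i\ge1$. $p$ subsumes $p'$ if $p$ produces every finite or infinite trace that $p'$ produces. *)

theory Defs
  imports Main
begin

text \<open>Actions: a finite type 'a (= Act). LTS transitions labelled by 'a option,
  where None plays the role of the silent action tau.\<close>

type_synonym ('p, 'a) lts = "'p \<Rightarrow> 'a option \<Rightarrow> 'p \<Rightarrow> bool"

definition tau_steps :: "('p, 'a) lts \<Rightarrow> 'p \<Rightarrow> 'p \<Rightarrow> bool" where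
  "tau_steps T = (\<lambda>p q. T p None q)\<^sup>*\<^sup>*"

definition wstep :: "('p, 'a) lts \<Rightarrow> 'p \<Rightarrow> 'a \<Rightarrow> 'p \<Rightarrow> bool" where
  "wstep T p a q \<longleftrightarrow> (\<exists>p1 p2. tau_steps T p p1 \<and> T p1 (Some a) p2 \<and> tau_steps T p2 q)"

fun wsteps :: "('p, 'a) lts \<Rightarrow> 'p \<Rightarrow> 'a list \<Rightarrow> 'p \<Rightarrow> bool" where
  "wsteps T p [] q \<longleftrightarrow> p = q"
| "wsteps T p (a # s) q \<longleftrightarrow> (\<exists>r. wstep T p a r \<and> wsteps T r s q)"

definition produces_fin :: "('p, 'a) lts \<Rightarrow> 'p \<Rightarrow> 'a list \<Rightarrow> bool" where
  "produces_fin T p s \<longleftrightarrow> (\<exists>q. wsteps T p s q)"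

text \<open>Infinite trace a_1 a_2 ... represented as w :: nat => 'a with w i = a_(i+1).\<close>
definition produces_inf :: "('p, 'a) lts \<Rightarrow> 'p \<Rightarrow> (nat \<Rightarrow> 'a) \<Rightarrow> bool" where
  "produces_inf T p w \<longleftrightarrow> (\<exists>ps. ps 0 = p \<and> (\<forall>i. wstep T (ps i) (w i) (ps (Suc i))))"

definition subsumes :: "('p, 'a) lts \<Rightarrow> 'p \<Rightarrow> ('q, 'a) lts \<Rightarrow> 'q \<Rightarrow> bool" where
  "subsumes T p T' p' \<longleftrightarrow>
     (\<forall>s. produces_fin T' p' s \<longrightarrow> produces_fin T p s) \<and>
     (\<forall>w. produces_inf T' p' w \<longrightarrow> produces_inf T p w)"

datatype ('a, 'v) shml = STT | SFF | SBox "'a set" "('a, 'v) shml"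
  | SAnd "('a, 'v) shml" "('a, 'v) shml" | SMax 'v "('a, 'v) shml" | SVar 'v

datatype ('a, 'v) chml = CTT | CFF | CDia "'a set" "('a, 'v) chml"
  | COr "('a, 'v) chml" "('a, 'v) chml" | CMin 'v "('a, 'v) chml" | CVar 'v

primrec ssem :: "('p, 'a) lts \<Rightarrow> ('a, 'v) shml \<Rightarrow> ('v \<Rightarrow> 'p set) \<Rightarrow> 'p set" where
  "ssem T STT \<rho> = UNIV"
| "ssem T SFF \<rho> = {}"
| "ssem T (SBox A \<phi>) \<rho> = {p. \<forall>a\<in>A. \<forall>q. wstep T p a q \<longrightarrow> q \<in> ssem T \<phi> \<rho>}"
| "ssem T (SAnd \<phi> \<psi>) \<rho> = ssem T \<phi> \<rho> \<inter> ssem T \<psi> \<rho>"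
| "ssem T (SMax X \<phi>) \<rho> = gfp (\<lambda>S. ssem T \<phi> (\<rho>(X := S)))"
| "ssem T (SVar X) \<rho> = \<rho> X"

primrec csem :: "('p, 'a) lts \<Rightarrow> ('a, 'v) chml \<Rightarrow> ('v \<Rightarrow> 'p set) \<Rightarrow> 'p set" where
  "csem T CTT \<rho> = UNIV"
| "csem T CFF \<rho> = {}"
| "csem T (CDia A \<phi>) \<rho> = {p. \<exists>a\<in>A. \<exists>q. wstep T p a q \<and> q \<in> csem T \<phi> \<rho>}"
| "csem T (COr \<phi> \<psi>) \<rho> = csem T \<phi> \<rho> \<union> csem T \<psi> \<rho>"
| "csem T (CMin X \<phi>) \<rho> = lfp (\<lambda>S. csem T \<phi> (\<rho>(X := S)))"
| "csem T (CVar X) \<rho> = \<rho> X"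

primrec sfv :: "('a, 'v) shml \<Rightarrow> 'v set" where
  "sfv STT = {}" | "sfv SFF = {}" | "sfv (SBox A \<phi>) = sfv \<phi>"
| "sfv (SAnd \<phi> \<psi>) = sfv \<phi> \<union> sfv \<psi>" | "sfv (SMax X \<phi>) = sfv \<phi> - {X}"
| "sfv (SVar X) = {X}"

primrec cfv :: "('a, 'v) chml \<Rightarrow> 'v set" where
  "cfv CTT = {}" | "cfv CFF = {}" | "cfv (CDia A \<phi>) = cfv \<phi>"
| "cfv (COr \<phi> \<psi>) = cfv \<phi> \<union> cfv \<psi>" | "cfv (CMin X \<phi>) = cfv \<phi> - {X}"
| "cfv (CVar X) = {X}"

primrec sguarded_in :: "'v \<Rightarrow> ('a, 'v) shml \<Rightarrow> bool" where
  "sguarded_in X STT = True" | "sguarded_in X SFF = True" | "sguarded_in X (SBox A \<phi>) = True"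
| "sguarded_in X (SAnd \<phi> \<psi>) = (sguarded_in X \<phi> \<and> sguarded_in X \<psi>)"
| "sguarded_in X (SMax Y \<phi>) = (Y = X \<or> sguarded_in X \<phi>)"
| "sguarded_in X (SVar Y) = (Y \<noteq> X)"

primrec sguarded :: "('a, 'v) shml \<Rightarrow> bool" where
  "sguarded STT = True" | "sguarded SFF = True" | "sguarded (SBox A \<phi>) = sguarded \<phi>"
| "sguarded (SAnd \<phi> \<psi>) = (sguarded \<phi> \<and> sguarded \<psi>)"
| "sguarded (SMax X \<phi>) = (sguarded_in X \<phi> \<and> sguarded \<phi>)"
| "sguarded (SVar X) = True"

primrec cguarded_in :: "'v \<Rightarrow> ('a, 'v) chml \<Rightarrow> bool" where
  "cguarded_in X CTT = True" | "cguarded_in X CFF = True" | "cguarded_in X (CDia A \<phi>) = True"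
| "cguarded_in X (COr \<phi> \<psi>) = (cguarded_in X \<phi> \<and> cguarded_in X \<psi>)"
| "cguarded_in X (CMin Y \<phi>) = (Y = X \<or> cguarded_in X \<phi>)"
| "cguarded_in X (CVar Y) = (Y \<noteq> X)"

primrec cguarded :: "('a, 'v) chml \<Rightarrow> bool" where
  "cguarded CTT = True" | "cguarded CFF = True" | "cguarded (CDia A \<phi>) = cguarded \<phi>"
| "cguarded (COr \<phi> \<psi>) = (cguarded \<phi> \<and> cguarded \<psi>)"
| "cguarded (CMin X \<phi>) = (cguarded_in X \<phi> \<and> cguarded \<phi>)"
| "cguarded (CVar X) = True"

end

theory Submission
  imports Defs
begin

text \<open>Only finite traces matter. Call a set Q of processes a cover of p' if every finite
  trace of p' is a trace of some member of Q; subsumption makes {p} a cover of p', and the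
  a-derivatives of a cover of p' cover every a-derivative of p'. By induction on formulas, an
  sHML formula holds at p' as soon as it holds on some cover of p', and a cHML formula holding
  at p' holds somewhere on every cover of p'. At a fixpoint binder the other side's greatest
  (least) fixpoint is compared with the set of processes having a cover inside (meeting) it,
  which is a post- (pre-) fixpoint.\<close>

definition fin_traces :: "('p, 'a) lts \<Rightarrow> 'p \<Rightarrow> 'a list set" where
  "fin_traces T p = {s. produces_fin T p s}"

lemma Nil_in_fin_traces: "[] \<in> fin_traces T p"
  by (auto simp: fin_traces_def produces_fin_def)

lemma Cons_in_fin_traces_iff:
  "a # s \<in> fin_traces T p \<longleftrightarrow> (\<exists>q. wstep T p a q \<and> s \<in> fin_traces T q)"
  unfolding fin_traces_def produces_fin_def by force

definition covers :: "('p, 'a) lts \<Rightarrow> 'p set \<Rightarrow> ('q, 'a) lts \<Rightarrow> 'q \<Rightarrow> bool" where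
  "covers T Q T' p' \<longleftrightarrow> fin_traces T' p' \<subseteq> \<Union>(fin_traces T ` Q)"

lemma covers_nonempty: "covers T Q T' p' \<Longrightarrow> Q \<noteq> {}"
  using Nil_in_fin_traces[of T' p'] by (auto simp: covers_def)

lemma subsumes_covers_singleton: "subsumes T p T' p' \<Longrightarrow> covers T {p} T' p'"
  by (auto simp: subsumes_def covers_def fin_traces_def)

lemma covers_wstep:
  assumes "covers T Q T' p'" and "wstep T' p' a q'"
  shows "covers T {q. \<exists>p\<in>Q. wstep T p a q} T' q'"
  unfolding covers_def
proof
  fix s assume "s \<in> fin_traces T' q'"
  with assms(2) have "a # s \<in> fin_traces T' p'"
    by (auto simp: Cons_in_fin_traces_iff)
  with assms(1) obtain p where "p \<in> Q" "a # s \<in> fin_traces T p"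
    by (auto simp: covers_def)
  then show "s \<in> \<Union>(fin_traces T ` {q. \<exists>p\<in>Q. wstep T p a q})"
    by (auto simp: Cons_in_fin_traces_iff)
qed

definition cover_closed :: "('p, 'a) lts \<Rightarrow> ('q, 'a) lts \<Rightarrow> 'p set \<Rightarrow> 'q set \<Rightarrow> bool" where
  "cover_closed T T' S S' \<longleftrightarrow> (\<forall>Q p'. Q \<subseteq> S \<and> covers T Q T' p' \<longrightarrow> p' \<in> S')"

definition cover_reflects :: "('p, 'a) lts \<Rightarrow> ('q, 'a) lts \<Rightarrow> 'p set \<Rightarrow> 'q set \<Rightarrow> bool" where
  "cover_reflects T T' S S' \<longleftrightarrow> (\<forall>Q p'. p' \<in> S' \<and> covers T Q T' p' \<longrightarrow> Q \<inter> S \<noteq> {})"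

lemma cover_closed_empty: "cover_closed T T' {} {}"
  by (auto simp: cover_closed_def dest: covers_nonempty)

lemma cover_reflects_empty: "cover_reflects T T' {} {}"
  by (simp add: cover_reflects_def)

lemma cover_closed_gfp:
  assumes "mono F"
    and step: "\<And>S S'. cover_closed T T' S S' \<Longrightarrow> cover_closed T T' (F S) (F' S')"
  shows "cover_closed T T' (gfp F) (gfp F')"
proof -
  define G' where "G' = {p'. \<exists>Q \<subseteq> gfp F. covers T Q T' p'}"
  have closed: "cover_closed T T' (gfp F) G'"
    by (auto simp: cover_closed_def G'_def)
  have "G' \<subseteq> F' G'"
  proof
    fix p' assume "p' \<in> G'"
    then obtain Q where "Q \<subseteq> F (gfp F)" "covers T Q T' p'"
      using gfp_unfold[OF \<open>mono F\<close>] by (auto simp: G'_def)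
    with step[OF closed] show "p' \<in> F' G'"
      by (auto simp: cover_closed_def)
  qed
  then have "G' \<subseteq> gfp F'"
    by (rule gfp_upperbound)
  with closed show ?thesis
    by (auto simp: cover_closed_def)
qed

lemma cover_reflects_lfp:
  assumes "mono F"
    and step: "\<And>S S'. cover_reflects T T' S S' \<Longrightarrow> cover_reflects T T' (F S) (F' S')"
  shows "cover_reflects T T' (lfp F) (lfp F')"
proof -
  define G' where "G' = {p'. \<forall>Q. covers T Q T' p' \<longrightarrow> Q \<inter> lfp F \<noteq> {}}"
  have reflects: "cover_reflects T T' (lfp F) G'"
    by (auto simp: cover_reflects_def G'_def)
  have "F' G' \<subseteq> G'"
    using step[OF reflects] lfp_unfold[OF \<open>mono F\<close>]
    by (auto simp: cover_reflects_def G'_def)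
  then have "lfp F' \<subseteq> G'"
    by (rule lfp_lowerbound)
  with reflects show ?thesis
    by (auto simp: cover_reflects_def)
qed

lemma ssem_mono_env: "\<rho> \<le> \<sigma> \<Longrightarrow> ssem T \<phi> \<rho> \<subseteq> ssem T \<phi> \<sigma>"
proof (induction \<phi> arbitrary: \<rho> \<sigma>)
  case (SBox A \<phi>)
  then show ?case
    by fastforce
next
  case (SAnd \<phi>1 \<phi>2)
  then show ?case
    by fastforce
next
  case (SMax X \<phi>)
  have "ssem T \<phi> (\<rho>(X := Z)) \<subseteq> ssem T \<phi> (\<sigma>(X := Z))" for Z
    by (rule SMax.IH) (use SMax.prems in \<open>simp add: le_fun_def\<close>)
  then show ?case
    by (simp add: gfp_mono)
qed (simp_all add: le_fun_def)

lemma csem_mono_env: "\<rho> \<le> \<sigma> \<Longrightarrow> csem T \<phi> \<rho> \<subseteq> csem T \<phi> \<sigma>"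
proof (induction \<phi> arbitrary: \<rho> \<sigma>)
  case (CDia A \<phi>)
  then show ?case
    by fastforce
next
  case (COr \<phi>1 \<phi>2)
  then show ?case
    by fastforce
next
  case (CMin X \<phi>)
  have "csem T \<phi> (\<rho>(X := Z)) \<subseteq> csem T \<phi> (\<sigma>(X := Z))" for Z
    by (rule CMin.IH) (use CMin.prems in \<open>simp add: le_fun_def\<close>)
  then show ?case
    by (simp add: lfp_mono)
qed (simp_all add: le_fun_def)

lemma mono_ssem_update: "mono (\<lambda>S. ssem T \<phi> (\<rho>(X := S)))"
  by (rule monoI, rule ssem_mono_env) (simp add: le_fun_def)

lemma mono_csem_update: "mono (\<lambda>S. csem T \<phi> (\<rho>(X := S)))"
  by (rule monoI, rule csem_mono_env) (simp add: le_fun_def)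

lemma cover_closed_ssem:
  "(\<And>X. cover_closed T T' (\<rho> X) (\<rho>' X))
    \<Longrightarrow> cover_closed T T' (ssem T \<phi> \<rho>) (ssem T' \<phi> \<rho>')"
proof (induction \<phi> arbitrary: \<rho> \<rho>')
  case SFF
  then show ?case
    by (simp add: cover_closed_empty)
next
  case (SBox A \<phi>)
  have IH: "cover_closed T T' (ssem T \<phi> \<rho>) (ssem T' \<phi> \<rho>')"
    using SBox by blast
  show ?case unfolding cover_closed_def
  proof (intro allI impI, elim conjE)
    fix Q p' assume Q: "Q \<subseteq> ssem T (SBox A \<phi>) \<rho>" and cover: "covers T Q T' p'"
    have "q' \<in> ssem T' \<phi> \<rho>'" if "a \<in> A" "wstep T' p' a q'" for a q'
    proof -
      have "{q. \<exists>p\<in>Q. wstep T p a q} \<subseteq> ssem T \<phi> \<rho>"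
        using Q \<open>a \<in> A\<close> by fastforce
      moreover have "covers T {q. \<exists>p\<in>Q. wstep T p a q} T' q'"
        using cover \<open>wstep T' p' a q'\<close> by (rule covers_wstep)
      ultimately show ?thesis
        using IH unfolding cover_closed_def by blast
    qed
    then show "p' \<in> ssem T' (SBox A \<phi>) \<rho>'"
      by simp
  qed
next
  case (SAnd \<phi>1 \<phi>2)
  then have "cover_closed T T' (ssem T \<phi>1 \<rho>) (ssem T' \<phi>1 \<rho>')"
    and "cover_closed T T' (ssem T \<phi>2 \<rho>) (ssem T' \<phi>2 \<rho>')"
    by blast+
  then show ?case
    unfolding cover_closed_def by auto
next
  case (SMax X \<phi>)
  then show ?case
    by (auto intro!: cover_closed_gfp mono_ssem_update)
qed (auto simp: cover_closed_def)

lemma cover_reflects_csem: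
  "(\<And>X. cover_reflects T T' (\<rho> X) (\<rho>' X))
    \<Longrightarrow> cover_reflects T T' (csem T \<phi> \<rho>) (csem T' \<phi> \<rho>')"
proof (induction \<phi> arbitrary: \<rho> \<rho>')
  case CTT
  then show ?case
    by (auto simp: cover_reflects_def dest: covers_nonempty)
next
  case (CDia A \<phi>)
  have IH: "cover_reflects T T' (csem T \<phi> \<rho>) (csem T' \<phi> \<rho>')"
    using CDia by blast
  show ?case unfolding cover_reflects_def
  proof (intro allI impI, elim conjE)
    fix Q p' assume "p' \<in> csem T' (CDia A \<phi>) \<rho>'" and cover: "covers T Q T' p'"
    then obtain a q' where "a \<in> A" "wstep T' p' a q'" "q' \<in> csem T' \<phi> \<rho>'"
      by auto
    moreover have "covers T {q. \<exists>p\<in>Q. wstep T p a q} T' q'"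
      using cover \<open>wstep T' p' a q'\<close> by (rule covers_wstep)
    ultimately have "{q. \<exists>p\<in>Q. wstep T p a q} \<inter> csem T \<phi> \<rho> \<noteq> {}"
      using IH unfolding cover_reflects_def by blast
    with \<open>a \<in> A\<close> show "Q \<inter> csem T (CDia A \<phi>) \<rho> \<noteq> {}"
      by auto
  qed
next
  case (COr \<phi>1 \<phi>2)
  then have "cover_reflects T T' (csem T \<phi>1 \<rho>) (csem T' \<phi>1 \<rho>')"
    and "cover_reflects T T' (csem T \<phi>2 \<rho>) (csem T' \<phi>2 \<rho>')"
    by blast+
  then show ?case
    unfolding cover_reflects_def by (simp add: Int_Un_distrib) blast
next
  case (CMin X \<phi>)
  then show ?case
    by (auto intro!: cover_reflects_lfp mono_csem_update)
qed (auto simp: cover_reflects_def)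

theorem mainTheorem16:
  fixes T :: "('p, 'a::finite) lts" and T' :: "('q, 'a) lts"
    and p :: 'p and p' :: 'q
  assumes "subsumes T p T' p'"
  shows "(\<forall>\<phi> :: ('a, 'v) shml. sguarded \<phi> \<and> sfv \<phi> = {} \<and> p \<in> ssem T \<phi> (\<lambda>_. {})
            \<longrightarrow> p' \<in> ssem T' \<phi> (\<lambda>_. {}))
       \<and> (\<forall>\<phi> :: ('a, 'v) chml. cguarded \<phi> \<and> cfv \<phi> = {} \<and> p \<notin> csem T \<phi> (\<lambda>_. {})
            \<longrightarrow> p' \<notin> csem T' \<phi> (\<lambda>_. {}))"
proof -
  have cover: "covers T {p} T' p'"
    using assms by (rule subsumes_covers_singleton)
  have "cover_closed T T' (ssem T \<phi> (\<lambda>_. {})) (ssem T' \<phi> (\<lambda>_. {}))" for \<phi> :: "('a, 'v) shml"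
    by (rule cover_closed_ssem) (simp add: cover_closed_empty)
  moreover have "cover_reflects T T' (csem T \<psi> (\<lambda>_. {})) (csem T' \<psi> (\<lambda>_. {}))"
    for \<psi> :: "('a, 'v) chml"
    by (rule cover_reflects_csem) (simp add: cover_reflects_empty)
  ultimately show ?thesis
    using cover unfolding cover_closed_def cover_reflects_def by blast
qed

end
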